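(* Fix $k\in[m-1]$ and let $q_k(D)=h_{(k)}(D)-h_{(k+1)}(D)$. Let $\hat q_k$ be a randomized release of $q_k$ which, as a mechanism, obeys $(\alpha,\epsilon_{gap}(\alpha))$-RDP, and which satisfies $\Pr[\hat q_k\ge q_k]\le\delta_t$ for every dataset (probability over the randomness of $\hat q_k$ only). Then the mechanism that outputs the set of top-$k$ indices $\{i_{(1)},\dots,i_{(k)}\}$ directly (without noise) if $\hat q_k>1$, and outputs $\perp$ otherwise, satisfies $\delta_t$-approximate-$(\alpha,\epsilon_{gap}(\alpha))$-RDP.
   Context: Setting: a dataset consists of users; there are $m$ candidates and each user votes $1$ for an arbitrary subset of candidates; $h_j(D)$ is the number of users voting for candidate $j$. Datasets are neighboring if one is obtained from the other by adding or removing one user. $h_{(1)}\ge\dots\ge h_{(m)}$ are the sorted counts with corresponding candidates $i_{(1)},\dots,i_{(m)}$. Rényi divergence: $\mathbb{D}_\alpha(P\|Q)=\frac{1}{\alpha-1}\log\mathbb{E}_{o\sim Q}[(P(o)/Q(o))^\alpha]$; $\mathcal{M}$ is $(\alpha,\epsilon(\alpha))$-RDP if $\mathbb{D}_\alpha(\mathcal{M}(D)\|\mathcal{M}(D'))\le\epsilon(\alpha)$ for all neighbors. $\mathcal{M}$ is $\delta$-approximate-$(\alpha,\epsilon(\alpha))$-RDP if for all neighbors $D,D'$ there exist events $E$ (depending on $\mathcal{M}(D)$) and $E'$ (depending on $\mathcal{M}(D')$) with $\Pr[E]\ge1-\delta$, $\Pr[E']\ge1-\delta$ and $\mathbb{D}_\alpha(\mathcal{M}(D)|E\|\mathcal{M}(D')|E')\le\epsilon(\alpha)$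 for all $\alpha\ge1$. *)

theory Defs
  imports "HOL-Probability.Probability" "HOL-Library.Multiset"
begin

(* Candidates are 0..<m; a user is the set of candidates it votes for;
   a dataset is a multiset of users. *)
definition valid_ds :: "nat \<Rightarrow> nat set multiset \<Rightarrow> bool" where
  "valid_ds m D \<longleftrightarrow> (\<forall>u\<in>#D. u \<subseteq> {..<m})"

definition neighbors :: "nat \<Rightarrow> nat set multiset \<Rightarrow> nat set multiset \<Rightarrow> bool" where
  "neighbors m D D' \<longleftrightarrow> valid_ds m D \<and> valid_ds m D' \<and>
     ((\<exists>u. D' = D + {#u#}) \<or> (\<exists>u. D = D' + {#u#}))"

definition hcount :: "nat set multiset \<Rightarrow> nat \<Rightarrow> nat" where
  "hcount D j = size (filter_mset (\<lambda>u. j \<in> u) D)"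

(* candidates in decreasing order of count (ties broken by smaller index,
   since sort_key is a stable sort and [0..<m] is increasing):
   the list i_(1), ..., i_(m) (0-based list) *)
definition ranked :: "nat \<Rightarrow> nat set multiset \<Rightarrow> nat list" where
  "ranked m D = sort_key (\<lambda>j. - int (hcount D j)) [0..<m]"

definition hsorted :: "nat \<Rightarrow> nat set multiset \<Rightarrow> nat \<Rightarrow> nat" where
  "hsorted m D k = hcount D (ranked m D ! (k - 1))"

definition gap :: "nat \<Rightarrow> nat \<Rightarrow> nat set multiset \<Rightarrow> real" where
  "gap m k D = real (hsorted m D k) - real (hsorted m D (k + 1))"

definition topk :: "nat \<Rightarrow> nat \<Rightarrow> nat set multiset \<Rightarrow> nat set" where
  "topk m k D = set (take k (ranked m D))"

definition renyi_div :: "real \<Rightarrow> 'a measure \<Rightarrow> 'a measure \<Rightarrow> ereal" where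
  "renyi_div \<alpha> P Q =
    (if sets P = sets Q \<and> absolutely_continuous Q P then
       (let f = (\<lambda>x. enn2real (RN_deriv Q P x)) in
        if \<alpha> = 1 then
          (if integrable P (\<lambda>x. ln (f x)) then ereal (\<integral>x. ln (f x) \<partial>P) else \<infinity>)
        else
          (let I = (\<integral>\<^sup>+ x. ennreal (f x powr \<alpha>) \<partial>Q) in
           if I = \<infinity> then \<infinity> else ereal (ln (enn2real I) / (\<alpha> - 1))))
     else \<infinity>)"

(* A mechanism: dataset \<Rightarrow> (randomness \<Rightarrow> output), randomness distributed by
   the probability space M, outputs measured in the space N. *)
definition rdp :: "'w measure \<Rightarrow> 'b measure \<Rightarrow> (nat set multiset \<Rightarrow> nat set multiset \<Rightarrow> bool)
    \<Rightarrow> (nat set multiset \<Rightarrow> 'w \<Rightarrow> 'b) \<Rightarrow> real \<Rightarrow> real \<Rightarrow> bool" where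
  "rdp M N nb mech \<alpha> \<epsilon> \<longleftrightarrow>
     (\<forall>D D'. nb D D' \<longrightarrow> renyi_div \<alpha> (distr M N (mech D)) (distr M N (mech D')) \<le> ereal \<epsilon>)"

(* delta-approximate-(alpha, eps(alpha))-RDP; the events are events of the
   mechanism's randomness, conditioning = uniform_measure. *)
definition approx_rdp :: "'w measure \<Rightarrow> 'b measure \<Rightarrow> (nat set multiset \<Rightarrow> nat set multiset \<Rightarrow> bool)
    \<Rightarrow> (nat set multiset \<Rightarrow> 'w \<Rightarrow> 'b) \<Rightarrow> real \<Rightarrow> (real \<Rightarrow> real) \<Rightarrow> bool" where
  "approx_rdp M N nb mech \<delta> \<epsilon> \<longleftrightarrow>
     (\<forall>D D'. nb D D' \<longrightarrow>
        (\<exists>E E'. E \<in> sets M \<and> E' \<in> sets M \<and>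
           measure M E \<ge> 1 - \<delta> \<and> measure M E' \<ge> 1 - \<delta> \<and>
           (\<forall>\<alpha>\<ge>1. renyi_div \<alpha> (distr (uniform_measure M E) N (mech D))
                                 (distr (uniform_measure M E') N (mech D')) \<le> ereal (\<epsilon> \<alpha>))))"

end

(*
  If neighbouring datasets D, D' have the same top-k set, both runs of the mechanism
  are the image of the gap release qhat under one and the same two-valued map, so the
  data-processing inequality for Renyi divergence transfers the RDP bound of qhat,
  with the trivial events E = E' = everything. For a finite-valued map g, the
  data-processing inequality is Jensen's inequality on each cell g^-1{y}, applied to
  t ln t (alpha = 1) and t^alpha (alpha > 1) through their supporting lines.

  If the top-k sets differ, the gaps of D and D' are at most 1: adding or removing one
  user moves every count by 0 or 1 in the same direction, so a gap of at least 2
  would keep the top-k set. On the events {qhat <= 1}, whose probability is at least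
  1 - delta_t by the tail bound, both mechanisms then output None with certainty,
  and the conditioned divergence is 0.
*)

theory Submission
  imports Defs
begin

section \<open>Jensen's inequality on a finite partition\<close>

lemma powr_ge_tangent:
  fixes t c \<alpha> :: real
  assumes "0 \<le> t" "0 < c" "1 \<le> \<alpha>"
  shows "c powr \<alpha> + \<alpha> * c powr (\<alpha> - 1) * (t - c) \<le> t powr \<alpha>"
proof -
  have "c powr (\<alpha> - 1) * c = c powr \<alpha>"
    using assms by (simp add: powr_diff)
  moreover have "\<alpha> * c powr (\<alpha> - 1) * t \<le> t powr \<alpha> + (\<alpha> - 1) * c powr \<alpha>"
  proof (cases "t = 0")
    case True
    then show ?thesis using assms by simp
  next
    case False
    then have "0 < t" using assms by simp
    have "(t powr \<alpha>) powr (1/\<alpha>) * (c powr \<alpha>) powr (1 - 1/\<alpha>)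
            \<le> (1/\<alpha>) * t powr \<alpha> + (1 - 1/\<alpha>) * c powr \<alpha>"
      using assms \<open>0 < t\<close> by (intro Youngs_inequality_0) auto
    moreover have "(t powr \<alpha>) powr (1/\<alpha>) * (c powr \<alpha>) powr (1 - 1/\<alpha>) = t * c powr (\<alpha> - 1)"
      using assms \<open>0 < t\<close> by (simp add: powr_powr algebra_simps)
    ultimately show ?thesis using assms by (simp add: field_simps)
  qed
  ultimately show ?thesis by (simp add: algebra_simps)
qed

lemma t_ln_t_ge_tangent:
  fixes t c :: real
  assumes "0 \<le> t" "0 < c"
  shows "c * ln c + (ln c + 1) * (t - c) \<le> t * ln t"
proof (cases "t = 0")
  case True
  then show ?thesis using assms by simp
next
  case False
  then have "0 < t" using assms by simp
  have "t * ln (c / t) \<le> t * (c / t - 1)"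
    using assms \<open>0 < t\<close> by (intro mult_left_mono ln_le_minus_one) auto
  also have "\<dots> = c - t" using \<open>0 < t\<close> by (simp add: field_simps)
  finally show ?thesis using assms \<open>0 < t\<close> by (simp add: ln_div algebra_simps)
qed

lemma jensen_on_set:
  fixes f :: "'a \<Rightarrow> real" and \<phi> :: "real \<Rightarrow> real"
  assumes "finite_measure Q" and A: "A \<in> sets Q"
    and f_nonneg: "\<And>x. 0 \<le> f x" and int_f: "integrable Q f"
    and int_\<phi>f: "integrable Q (\<lambda>x. \<phi> (f x))"
    and tangent: "\<And>c. 0 < c \<Longrightarrow> \<exists>a. \<forall>t\<ge>0. \<phi> c + a * (t - c) \<le> \<phi> t"
  shows "measure Q A * \<phi> ((\<integral>x. f x * indicator A x \<partial>Q) / measure Q A)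
           \<le> (\<integral>x. \<phi> (f x) * indicator A x \<partial>Q)"
proof -
  interpret finite_measure Q by fact
  define p where "p = (\<integral>x. f x * indicator A x \<partial>Q)"
  define q where "q = measure Q A"
  have int_fA: "integrable Q (\<lambda>x. f x * indicator A x)"
    using int_f by (rule integrable_real_mult_indicator[OF A])
  have int_\<phi>fA: "integrable Q (\<lambda>x. \<phi> (f x) * indicator A x)"
    using int_\<phi>f by (rule integrable_real_mult_indicator[OF A])
  have int_A: "integrable Q (indicator A :: 'a \<Rightarrow> real)"
    using A by (simp add: integrable_indicator_iff emeasure_eq_measure)
  have "0 \<le> p"
    unfolding p_def using f_nonneg by (intro integral_nonneg_AE) (simp add: indicator_def)
  consider "q = 0" | "0 < q" "p = 0" | "0 < q" "0 < p"
    using \<open>0 \<le> p\<close> measure_nonneg[of Q A] unfolding q_def by linarith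
  then have "q * \<phi> (p / q) \<le> (\<integral>x. \<phi> (f x) * indicator A x \<partial>Q)"
  proof cases
    case 1
    then have "AE x in Q. x \<notin> A"
      using A by (intro AE_not_in) (simp add: q_def emeasure_eq_measure null_sets_def)
    then have "(\<integral>x. \<phi> (f x) * indicator A x \<partial>Q) = (\<integral>x. 0 \<partial>Q)"
      using int_\<phi>fA by (intro integral_cong_AE) auto
    then show ?thesis using 1 by simp
  next
    case 2
    then have "AE x in Q. f x * indicator A x = 0"
      using int_fA f_nonneg by (subst integral_nonneg_eq_0_iff_AE[symmetric]) (auto simp: p_def)
    then have "(\<integral>x. \<phi> (f x) * indicator A x \<partial>Q) = (\<integral>x. \<phi> 0 * indicator A x \<partial>Q)"
      using int_\<phi>fA A by (intro integral_cong_AE) (auto simp: indicator_def elim!: AE_mp)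
    then show ?thesis using 2 A by (simp add: q_def)
  next
    case 3
    define c where "c = p / q"
    obtain a where a: "\<And>t. 0 \<le> t \<Longrightarrow> \<phi> c + a * (t - c) \<le> \<phi> t"
      using tangent[of c] 3 by (auto simp: c_def)
    have "q * \<phi> c = (\<phi> c - a * c) * q + a * p"
      using 3 by (simp add: c_def algebra_simps)
    also have "\<dots> = (\<integral>x. (\<phi> c - a * c) * indicator A x + a * (f x * indicator A x) \<partial>Q)"
      using int_fA int_A A by (simp add: p_def q_def)
    also have "\<dots> \<le> (\<integral>x. \<phi> (f x) * indicator A x \<partial>Q)"
      using int_fA int_A a[OF f_nonneg]
      by (intro integral_mono int_\<phi>fA Bochner_Integration.integrable_add integrable_mult_right)
        (auto split: split_indicator simp: algebra_simps)
    finally show ?thesis unfolding c_def .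
  qed
  then show ?thesis by (simp add: p_def q_def)
qed

lemma integral_finite_partition:
  fixes h :: "'a \<Rightarrow> real" and g :: "'a \<Rightarrow> 'b"
  assumes Y: "finite Y" "\<And>x. x \<in> space Q \<Longrightarrow> g x \<in> Y"
    and g: "g \<in> Q \<rightarrow>\<^sub>M count_space UNIV" and h: "integrable Q h"
  shows "(\<integral>x. h x \<partial>Q) = (\<Sum>y\<in>Y. \<integral>x. h x * indicator (g -` {y} \<inter> space Q) x \<partial>Q)"
proof -
  have "(\<integral>x. h x \<partial>Q) = (\<integral>x. (\<Sum>y\<in>Y. h x * indicator (g -` {y} \<inter> space Q) x) \<partial>Q)"
  proof (intro Bochner_Integration.integral_cong refl)
    fix x assume "x \<in> space Q"
    then have "(\<Sum>y\<in>Y. h x * indicator (g -` {y} \<inter> space Q) x) = (\<Sum>y\<in>Y. if y = g x then h x else 0)"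
      by (intro sum.cong) (auto simp: indicator_def)
    also have "\<dots> = h x"
      using Y \<open>x \<in> space Q\<close> by simp
    finally show "h x = (\<Sum>y\<in>Y. h x * indicator (g -` {y} \<inter> space Q) x)" ..
  qed
  also have "\<dots> = (\<Sum>y\<in>Y. \<integral>x. h x * indicator (g -` {y} \<inter> space Q) x \<partial>Q)"
    using g h by (intro Bochner_Integration.integral_sum integrable_real_mult_indicator) auto
  finally show ?thesis .
qed

lemma jensen_finite_partition:
  fixes f :: "'a \<Rightarrow> real" and \<phi> :: "real \<Rightarrow> real" and g :: "'a \<Rightarrow> 'b"
  assumes Q: "finite_measure Q" and g: "g \<in> Q \<rightarrow>\<^sub>M count_space UNIV"
    and Y: "finite Y" "\<And>x. x \<in> space Q \<Longrightarrow> g x \<in> Y"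
    and f_nonneg: "\<And>x. 0 \<le> f x" and int_f: "integrable Q f"
    and int_\<phi>f: "integrable Q (\<lambda>x. \<phi> (f x))"
    and tangent: "\<And>c. 0 < c \<Longrightarrow> \<exists>a. \<forall>t\<ge>0. \<phi> c + a * (t - c) \<le> \<phi> t"
  shows "(\<Sum>y\<in>Y. measure Q (g -` {y} \<inter> space Q) *
            \<phi> ((\<integral>x. f x * indicator (g -` {y} \<inter> space Q) x \<partial>Q) / measure Q (g -` {y} \<inter> space Q)))
           \<le> (\<integral>x. \<phi> (f x) \<partial>Q)"
proof -
  have "(\<Sum>y\<in>Y. measure Q (g -` {y} \<inter> space Q) *
            \<phi> ((\<integral>x. f x * indicator (g -` {y} \<inter> space Q) x \<partial>Q) / measure Q (g -` {y} \<inter> space Q)))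
        \<le> (\<Sum>y\<in>Y. \<integral>x. \<phi> (f x) * indicator (g -` {y} \<inter> space Q) x \<partial>Q)"
    using g by (intro sum_mono jensen_on_set[OF Q _ f_nonneg int_f int_\<phi>f tangent]) auto
  also have "\<dots> = (\<integral>x. \<phi> (f x) \<partial>Q)"
    using Y g int_\<phi>f by (rule integral_finite_partition[symmetric])
  finally show ?thesis .
qed

section \<open>Data processing inequality for Renyi divergence\<close>

lemma
  fixes u :: "'a \<Rightarrow> real"
  assumes R: "finite_measure R" "sets R = sets (count_space UNIV)"
    and Y: "finite Y" "emeasure R (- Y) = 0"
  shows integrable_finite_support: "integrable R u"
    and integral_finite_support: "(\<integral>y. u y \<partial>R) = (\<Sum>y\<in>Y. u y * measure R {y})"
proof -
  interpret finite_measure R by fact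
  have "AE y in R. y \<in> Y"
    using Y(2) R(2) by (intro AE_I[of _ _ "- Y"]) (auto simp: sets_eq_imp_space_eq[OF R(2)])
  then have ae: "AE y in R. (\<Sum>a\<in>Y. u a * indicator {a} y) = u y"
    by eventually_elim (simp add: Y(1) indicator_def)
  have meas: "u \<in> borel_measurable R"
    using measurable_cong_sets[OF R(2) refl, of "borel :: real measure"] by simp

  have int: "integrable R (\<lambda>y. \<Sum>a\<in>Y. u a * indicator {a} y)"
    using R(2) by (intro Bochner_Integration.integrable_sum integrable_mult_right)
      (simp add: integrable_indicator_iff emeasure_eq_measure)
  show "integrable R u"
    using int meas ae by (rule integrable_cong_AE_imp)
  have "(\<integral>y. u y \<partial>R) = (\<integral>y. (\<Sum>a\<in>Y. u a * indicator {a} y) \<partial>R)"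
    using meas ae int by (intro integral_cong_AE) (auto elim: AE_mp)
  also have "\<dots> = (\<Sum>y\<in>Y. u y * measure R {y})"
    using R(2) by (subst Bochner_Integration.integral_sum)
      (auto simp: integrable_indicator_iff emeasure_eq_measure)
  finally show "(\<integral>y. u y \<partial>R) = (\<Sum>y\<in>Y. u y * measure R {y})" .
qed

lemma nn_integral_finite_support:
  assumes R: "sets R = sets (count_space UNIV)" and Y: "finite Y" "emeasure R (- Y) = 0"
  shows "(\<integral>\<^sup>+y. u y \<partial>R) = (\<Sum>y\<in>Y. u y * emeasure R {y})"
proof -
  have "AE y in R. y \<in> Y"
    using Y(2) R by (intro AE_I[of _ _ "- Y"]) (auto simp: sets_eq_imp_space_eq[OF R])
  then have "(\<integral>\<^sup>+y. u y \<partial>R) = (\<integral>\<^sup>+y. u y * indicator Y y \<partial>R)"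
    by (intro nn_integral_cong_AE) (auto elim: AE_mp)
  also have "\<dots> = (\<Sum>y\<in>Y. u y * emeasure R {y})"
    using R Y(1) by (intro nn_integral_indicator_finite) auto
  finally show ?thesis .
qed

lemma enn2real_RN_deriv_singleton:
  assumes "finite_measure P" "finite_measure Q" "absolutely_continuous Q P"
    and "sets P = sets (count_space UNIV)" "sets Q = sets (count_space UNIV)"
    and "0 < measure Q {y}"
  shows "enn2real (RN_deriv Q P y) = measure P {y} / measure Q {y}"
proof -
  interpret P: finite_measure P by fact
  interpret Q: finite_measure Q by fact
  have "emeasure P {y} = RN_deriv Q P y * emeasure Q {y}"
    using assms by (intro Q.RN_deriv_singleton) auto
  then have "measure P {y} = enn2real (RN_deriv Q P y * emeasure Q {y})"
    by (metis P.emeasure_eq_measure enn2real_ennreal measure_nonneg)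
  also have "\<dots> = enn2real (RN_deriv Q P y) * measure Q {y}"
    by (simp add: Q.emeasure_eq_measure enn2real_mult)
  finally show ?thesis using assms(6) by simp
qed

lemma renyi_div_1_finite_support:
  assumes P: "prob_space P" and Q: "prob_space Q"
    and sets: "sets P = sets (count_space UNIV)" "sets Q = sets (count_space UNIV)"
    and ac: "absolutely_continuous Q P" and Y: "finite Y" "emeasure Q (- Y) = 0"
  shows "renyi_div 1 P Q = ereal (\<Sum>y\<in>Y. measure Q {y} *
           (measure P {y} / measure Q {y} * ln (measure P {y} / measure Q {y})))"
proof -
  interpret P: prob_space P by fact
  interpret Q: prob_space Q by fact
  have null: "emeasure P A = 0" if "emeasure Q A = 0" for A
    using ac that sets unfolding absolutely_continuous_def by (auto simp: null_sets_def)
  define r where "r y = enn2real (RN_deriv Q P y)" for y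
  have "(\<integral>y. ln (r y) \<partial>P) = (\<Sum>y\<in>Y. ln (r y) * measure P {y})"
    using sets Y null by (intro integral_finite_support) auto
  also have "\<dots> = (\<Sum>y\<in>Y. measure Q {y} *
           (measure P {y} / measure Q {y} * ln (measure P {y} / measure Q {y})))"
  proof (intro sum.cong refl)
    fix y
    show "ln (r y) * measure P {y} = measure Q {y} *
           (measure P {y} / measure Q {y} * ln (measure P {y} / measure Q {y}))"
    proof (cases "measure Q {y} = 0")
      case True
      then show ?thesis
        using null[of "{y}"] by (simp add: P.emeasure_eq_measure Q.emeasure_eq_measure)
    next
      case False
      then have "r y = measure P {y} / measure Q {y}"
        unfolding r_def using assms P.finite_measure_axioms Q.finite_measure_axioms
        by (intro enn2real_RN_deriv_singleton) (simp_all add: zero_less_measure_iff)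
      then show ?thesis using False by simp
    qed
  qed
  finally show ?thesis
    using ac sets Y null integrable_finite_support[of P Y "\<lambda>y. ln (r y)"]
    by (simp add: renyi_div_def r_def P.finite_measure_axioms)
qed

lemma renyi_div_finite_support:
  assumes P: "prob_space P" and Q: "prob_space Q"
    and sets: "sets P = sets (count_space UNIV)" "sets Q = sets (count_space UNIV)"
    and ac: "absolutely_continuous Q P" and Y: "finite Y" "emeasure Q (- Y) = 0"
    and "\<alpha> \<noteq> 1"
  shows "renyi_div \<alpha> P Q = ereal (ln (\<Sum>y\<in>Y. measure Q {y} *
           (measure P {y} / measure Q {y}) powr \<alpha>) / (\<alpha> - 1))"
proof -
  interpret P: prob_space P by fact
  interpret Q: prob_space Q by fact
  define r where "r y = enn2real (RN_deriv Q P y)" for y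
  have "(\<integral>\<^sup>+y. ennreal (r y powr \<alpha>) \<partial>Q) = (\<Sum>y\<in>Y. ennreal (r y powr \<alpha>) * emeasure Q {y})"
    using sets Y by (intro nn_integral_finite_support) auto
  also have "\<dots> = (\<Sum>y\<in>Y. ennreal (measure Q {y} * (measure P {y} / measure Q {y}) powr \<alpha>))"
  proof (intro sum.cong refl)
    fix y
    show "ennreal (r y powr \<alpha>) * emeasure Q {y} =
            ennreal (measure Q {y} * (measure P {y} / measure Q {y}) powr \<alpha>)"
    proof (cases "measure Q {y} = 0")
      case True
      then show ?thesis by (simp add: Q.emeasure_eq_measure)
    next
      case False
      then have "r y = measure P {y} / measure Q {y}"
        unfolding r_def using assms P.finite_measure_axioms Q.finite_measure_axioms
        by (intro enn2real_RN_deriv_singleton) (simp_all add: zero_less_measure_iff)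
      then show ?thesis by (simp add: Q.emeasure_eq_measure ennreal_mult'' mult.commute)
    qed
  qed
  also have "\<dots> = ennreal (\<Sum>y\<in>Y. measure Q {y} * (measure P {y} / measure Q {y}) powr \<alpha>)"
    by (intro sum_ennreal) auto
  finally show ?thesis
    using ac sets \<open>\<alpha> \<noteq> 1\<close> by (simp add: renyi_div_def r_def sum_nonneg)
qed

lemma sum_ratio_powr_pos:
  fixes p q :: "'b \<Rightarrow> real"
  assumes "finite Y" "\<And>y. 0 \<le> p y" "\<And>y. 0 \<le> q y" "\<And>y. q y = 0 \<Longrightarrow> p y = 0"
    and "0 < (\<Sum>y\<in>Y. p y)"
  shows "0 < (\<Sum>y\<in>Y. q y * (p y / q y) powr \<alpha>)"
proof -
  obtain y where y: "y \<in> Y" "p y \<noteq> 0"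
    using assms(5) sum.neutral by force
  then have "0 < p y" using assms(2)[of y] by simp
  have "0 < q y" using assms(3,4)[of y] \<open>p y \<noteq> 0\<close> by (auto simp: less_le)
  then show ?thesis
    using y \<open>0 < p y\<close> assms(1-3) by (intro sum_pos2[of Y y]) auto
qed

lemma absolutely_continuous_distr:
  assumes ac: "absolutely_continuous Q P" and sets_eq: "sets P = sets Q" and g: "g \<in> Q \<rightarrow>\<^sub>M N"
  shows "absolutely_continuous (distr Q N g) (distr P N g)"
  unfolding absolutely_continuous_def
proof
  have gP: "g \<in> P \<rightarrow>\<^sub>M N"
    using measurable_cong_sets[OF sets_eq refl] g by blast
  fix B assume B: "B \<in> null_sets (distr Q N g)"
  then have "g -` B \<inter> space Q \<in> null_sets Q"
    using g by (auto simp: null_sets_def emeasure_distr)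
  then have "g -` B \<inter> space P \<in> null_sets P"
    using ac sets_eq_imp_space_eq[OF sets_eq] unfolding absolutely_continuous_def by auto
  then show "B \<in> null_sets (distr P N g)"
    using gP B by (auto simp: null_sets_def emeasure_distr)
qed

locale finite_postprocessing = P: prob_space P + Q: prob_space Q for P Q :: "'a measure" +
  fixes g :: "'a \<Rightarrow> 'b" and Y :: "'b set"
  assumes sets_eq: "sets P = sets Q" and ac: "absolutely_continuous Q P"
    and g: "g \<in> Q \<rightarrow>\<^sub>M count_space UNIV"
    and Y: "finite Y" "\<And>x. x \<in> space Q \<Longrightarrow> g x \<in> Y"
begin

abbreviation "P' \<equiv> distr P (count_space UNIV) g"
abbreviation "Q' \<equiv> distr Q (count_space UNIV) g"
abbreviation "dens x \<equiv> enn2real (RN_deriv Q P x)"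
abbreviation "cell y \<equiv> g -` {y} \<inter> space Q"

lemma g_measurable_P: "g \<in> P \<rightarrow>\<^sub>M count_space UNIV"
  using measurable_cong_sets[OF sets_eq refl] g by blast

sublocale P': prob_space P'
  using g_measurable_P by (rule P.prob_space_distr)

sublocale Q': prob_space Q'
  using g by (rule Q.prob_space_distr)

lemma absolutely_continuous_Q'_P': "absolutely_continuous Q' P'"
  using ac sets_eq g by (rule absolutely_continuous_distr)

lemma emeasure_Q'_compl: "emeasure Q' (- Y) = 0"
proof -
  have "g -` (- Y) \<inter> space Q = {}"
    using Y(2) by auto
  then show ?thesis
    using g by (simp add: emeasure_distr)
qed

lemma measure_Q'_singleton: "measure Q' {y} = measure Q (cell y)"
  using g by (simp add: measure_distr)

lemma density_dens: "density Q (\<lambda>x. ennreal (dens x)) = P"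
proof -
  have "AE x in Q. RN_deriv Q P x \<noteq> \<infinity>"
    using ac sets_eq by (intro Q.RN_deriv_finite P.sigma_finite_measure_axioms)
  then have "density Q (\<lambda>x. ennreal (dens x)) = density Q (RN_deriv Q P)"
    by (intro density_cong) (auto simp: less_top[symmetric] elim!: AE_mp)
  then show ?thesis
    using Q.density_RN_deriv[OF ac sets_eq] by simp
qed

lemma
  fixes h :: "'a \<Rightarrow> real"
  assumes "h \<in> borel_measurable Q"
  shows integrable_P_iff: "integrable P h \<longleftrightarrow> integrable Q (\<lambda>x. dens x * h x)"
    and integral_P: "(\<integral>x. h x \<partial>P) = (\<integral>x. dens x * h x \<partial>Q)"
  using integrable_density[of h Q dens] integral_density[of h Q dens] assms density_dens
  by simp_all

lemma integrable_dens: "integrable Q dens"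
  using integrable_P_iff[of "\<lambda>_. 1"] by simp

lemma measure_P'_singleton: "measure P' {y} = (\<integral>x. dens x * indicator (cell y) x \<partial>Q)"
proof -
  have cell: "cell y \<in> sets Q"
    using g by measurable
  have "measure P' {y} = measure P (cell y)"
    using g_measurable_P sets_eq_imp_space_eq[OF sets_eq] by (simp add: measure_distr)
  also have "\<dots> = (\<integral>x. indicator (cell y) x \<partial>P)"
    using cell sets_eq by simp
  also have "\<dots> = (\<integral>x. dens x * indicator (cell y) x \<partial>Q)"
    using cell by (intro integral_P) simp
  finally show ?thesis .
qed

lemma sum_measure_P'_singleton: "(\<Sum>y\<in>Y. measure P' {y}) = 1"
proof -
  have "g -` Y \<inter> space P = space P"
    using Y(2) sets_eq_imp_space_eq[OF sets_eq] by auto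
  then have "measure P' Y = 1"
    using g_measurable_P by (simp add: measure_distr P.prob_space)
  moreover have "measure P' Y = (\<Sum>y\<in>Y. measure P' {y})"
    using Y(1) by (intro measure_eq_sum_singleton) (auto simp: P'.emeasure_finite)
  ultimately show ?thesis by simp
qed

lemma jensen_distr:
  assumes "integrable Q (\<lambda>x. \<phi> (dens x))"
    and "\<And>c. 0 < c \<Longrightarrow> \<exists>a. \<forall>t\<ge>0. \<phi> c + a * (t - c) \<le> \<phi> t"
  shows "(\<Sum>y\<in>Y. measure Q' {y} * \<phi> (measure P' {y} / measure Q' {y})) \<le> (\<integral>x. \<phi> (dens x) \<partial>Q)"
  unfolding measure_P'_singleton measure_Q'_singleton
  by (rule jensen_finite_partition[OF Q.finite_measure_axioms g Y _ integrable_dens assms]) simp_all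

lemma renyi_div_1_distr_le: "renyi_div 1 P' Q' \<le> renyi_div 1 P Q"
proof (cases "integrable P (\<lambda>x. ln (dens x))")
  case False
  then show ?thesis using ac sets_eq by (simp add: renyi_div_def)
next
  case True
  then have "integrable Q (\<lambda>x. dens x * ln (dens x))"
    by (subst integrable_P_iff[symmetric]) simp_all
  moreover have "\<exists>a. \<forall>t\<ge>0. c * ln c + a * (t - c) \<le> t * ln t" if "0 < c" for c :: real
    using t_ln_t_ge_tangent[OF _ that] by auto
  ultimately have "(\<Sum>y\<in>Y. measure Q' {y} *
        (measure P' {y} / measure Q' {y} * ln (measure P' {y} / measure Q' {y})))
      \<le> (\<integral>x. dens x * ln (dens x) \<partial>Q)"
    by (rule jensen_distr[where \<phi> = "\<lambda>t. t * ln t"])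
  then show ?thesis
    using ac sets_eq True integral_P[of "\<lambda>x. ln (dens x)"]
      renyi_div_1_finite_support[OF P'.prob_space_axioms Q'.prob_space_axioms _ _
        absolutely_continuous_Q'_P' Y(1) emeasure_Q'_compl]
    by (simp add: renyi_div_def)
qed

lemma renyi_div_distr_le_gt_1:
  assumes "1 < \<alpha>"
  shows "renyi_div \<alpha> P' Q' \<le> renyi_div \<alpha> P Q"
proof (cases "(\<integral>\<^sup>+x. ennreal (dens x powr \<alpha>) \<partial>Q) = \<infinity>")
  case True
  then show ?thesis using ac sets_eq assms by (simp add: renyi_div_def)
next
  case False
  then have int: "integrable Q (\<lambda>x. dens x powr \<alpha>)"
    by (intro integrableI_nonneg) (auto simp: less_top)
  define S where "S = (\<Sum>y\<in>Y. measure Q' {y} * (measure P' {y} / measure Q' {y}) powr \<alpha>)"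
  have "measure P' {y} = 0" if "measure Q' {y} = 0" for y
    using absolutely_continuous_Q'_P' that
    unfolding absolutely_continuous_def
    by (auto simp: null_sets_def P'.emeasure_eq_measure Q'.emeasure_eq_measure)
  then have "0 < S"
    unfolding S_def using Y(1) sum_measure_P'_singleton by (intro sum_ratio_powr_pos) auto
  have "\<exists>a. \<forall>t\<ge>0. c powr \<alpha> + a * (t - c) \<le> t powr \<alpha>" if "0 < c" for c :: real
    using powr_ge_tangent[OF _ that less_imp_le[OF assms]] by auto
  then have "S \<le> (\<integral>x. dens x powr \<alpha> \<partial>Q)"
    unfolding S_def using int by (intro jensen_distr[where \<phi> = "\<lambda>t. t powr \<alpha>"])
  then have "ln S / (\<alpha> - 1) \<le> ln (\<integral>x. dens x powr \<alpha> \<partial>Q) / (\<alpha> - 1)"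
    using \<open>0 < S\<close> assms by (simp add: divide_right_mono)
  then show ?thesis
    using ac sets_eq assms False nn_integral_eq_integral[OF int]
      renyi_div_finite_support[OF P'.prob_space_axioms Q'.prob_space_axioms _ _
        absolutely_continuous_Q'_P' Y(1) emeasure_Q'_compl, of \<alpha>]
    by (simp add: renyi_div_def S_def)
qed

end

lemma renyi_div_distr_le:
  assumes "prob_space P" "prob_space Q" "sets P = sets Q"
    and "g \<in> Q \<rightarrow>\<^sub>M count_space UNIV" "finite Y" "\<And>x. x \<in> space Q \<Longrightarrow> g x \<in> Y"
    and "1 \<le> \<alpha>"
  shows "renyi_div \<alpha> (distr P (count_space UNIV) g) (distr Q (count_space UNIV) g)
           \<le> renyi_div \<alpha> P Q"
proof (cases "absolutely_continuous Q P")
  case False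
  then show ?thesis by (simp add: renyi_div_def)
next
  case True
  with assms interpret finite_postprocessing P Q g Y
    by (simp add: finite_postprocessing_def finite_postprocessing_axioms_def)
  show ?thesis
  proof (cases "\<alpha> = 1")
    case True
    then show ?thesis using renyi_div_1_distr_le by simp
  next
    case False
    then show ?thesis using renyi_div_distr_le_gt_1 \<open>1 \<le> \<alpha>\<close> by simp
  qed
qed

lemma renyi_div_self:
  assumes "finite_measure R"
  shows "renyi_div \<alpha> R R = (if \<alpha> = 1 then 0 else ereal (ln (measure R (space R)) / (\<alpha> - 1)))"
proof -
  interpret finite_measure R by fact
  have RN: "AE x in R. RN_deriv R R x = 1"
    using RN_deriv_unique_sigma_finite[of "\<lambda>_. 1" R R] sigma_finite_measure_axioms
    by (auto simp: density_1 elim: AE_mp)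
  then have "AE x in R. ln (enn2real (RN_deriv R R x)) = 0"
    by eventually_elim simp
  then have "integrable R (\<lambda>x. ln (enn2real (RN_deriv R R x)))"
    and "(\<integral>x. ln (enn2real (RN_deriv R R x)) \<partial>R) = 0"
    by (auto intro: integrable_cong_AE_imp[of R "\<lambda>_. 0"] simp: integral_eq_zero_AE elim: AE_mp)
  moreover have "(\<integral>\<^sup>+x. ennreal (enn2real (RN_deriv R R x) powr \<alpha>) \<partial>R) = emeasure R (space R)"
    using RN by (subst nn_integral_cong_AE[where v = "\<lambda>_. 1"]) (auto elim: AE_mp)
  ultimately show ?thesis
    by (simp add: renyi_div_def absolutely_continuous_def emeasure_eq_measure)
qed

lemma renyi_div_self_eq_0: "prob_space R \<Longrightarrow> renyi_div \<alpha> R R = 0"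
  by (simp add: renyi_div_self prob_space.finite_measure prob_space.prob_space)

lemma renyi_div_nonneg:
  assumes P: "prob_space P" and Q: "prob_space Q" and "sets P = sets Q" and "1 \<le> \<alpha>"
  shows "0 \<le> renyi_div \<alpha> P Q"
proof -
  interpret P: prob_space P by fact
  interpret Q: prob_space Q by fact
  have "renyi_div \<alpha> (distr P (count_space UNIV) (\<lambda>_. ())) (distr Q (count_space UNIV) (\<lambda>_. ()))
          \<le> renyi_div \<alpha> P Q"
    using assms by (intro renyi_div_distr_le[where Y = UNIV]) auto
  then show ?thesis
    by (simp add: renyi_div_self_eq_0 prob_space_return)
qed

lemma distr_uniform_measure_empty:
  assumes "h \<in> M \<rightarrow>\<^sub>M N"
  shows "distr (uniform_measure M {}) N h = null_measure N"
proof (rule measure_eqI)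
  have "h \<in> uniform_measure M {} \<rightarrow>\<^sub>M N"
    using assms by (simp cong: measurable_cong_sets)
  then show "emeasure (distr (uniform_measure M {}) N h) A = emeasure (null_measure N) A"
    if "A \<in> sets (distr (uniform_measure M {}) N h)" for A
    using that by (simp add: emeasure_distr)
qed simp

lemma renyi_div_null_measure: "renyi_div \<alpha> (null_measure N) (null_measure N) = 0"
proof -
  have "finite_measure (null_measure N)"
    by (rule finite_measureI) simp
  then show ?thesis by (simp add: renyi_div_self measure_def)
qed

section \<open>Approximate RDP of a thresholded release\<close>

lemma rdp_nonneg:
  assumes "prob_space M" "\<And>D. mech D \<in> M \<rightarrow>\<^sub>M N" "rdp M N nb mech \<alpha> \<epsilon>" "nb D D'" "1 \<le> \<alpha>"
  shows "0 \<le> \<epsilon>"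
proof -
  interpret prob_space M by fact
  have "0 \<le> renyi_div \<alpha> (distr M N (mech D)) (distr M N (mech D'))"
    using assms by (intro renyi_div_nonneg prob_space_distr) auto
  also have "\<dots> \<le> ereal \<epsilon>"
    using assms(3,4) by (simp add: rdp_def)
  finally show ?thesis by simp
qed

lemma rdp_postprocess:
  fixes g :: "'b \<Rightarrow> 'c"
  assumes "prob_space M" and mech: "\<And>D. mech D \<in> M \<rightarrow>\<^sub>M N" and "rdp M N nb mech \<alpha> \<epsilon>"
    and g: "g \<in> N \<rightarrow>\<^sub>M count_space UNIV" "finite Y" "\<And>x. x \<in> space N \<Longrightarrow> g x \<in> Y"
    and "1 \<le> \<alpha>"
  shows "rdp M (count_space UNIV) nb (\<lambda>D \<omega>. g (mech D \<omega>)) \<alpha> \<epsilon>"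
  unfolding rdp_def
proof (intro allI impI)
  interpret prob_space M by fact
  fix D D' assume "nb D D'"
  have distr_eq: "distr M (count_space UNIV) (\<lambda>\<omega>. g (mech D \<omega>))
      = distr (distr M N (mech D)) (count_space UNIV) g" for D
    using distr_distr[OF g(1) mech] by (simp add: comp_def)
  have "renyi_div \<alpha> (distr (distr M N (mech D)) (count_space UNIV) g)
          (distr (distr M N (mech D')) (count_space UNIV) g)
        \<le> renyi_div \<alpha> (distr M N (mech D)) (distr M N (mech D'))"
    using assms g by (intro renyi_div_distr_le prob_space_distr) auto
  also have "\<dots> \<le> ereal \<epsilon>"
    using assms(3) \<open>nb D D'\<close> by (simp add: rdp_def)
  finally show "renyi_div \<alpha> (distr M (count_space UNIV) (\<lambda>\<omega>. g (mech D \<omega>)))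
      (distr M (count_space UNIV) (\<lambda>\<omega>. g (mech D' \<omega>))) \<le> ereal \<epsilon>"
    by (simp add: distr_eq)
qed

lemma uniform_measure_space_eq:
  assumes "prob_space M"
  shows "uniform_measure M (space M) = M"
proof -
  interpret prob_space M by fact
  have "uniform_measure M (space M) = density M (\<lambda>_. 1)"
    unfolding uniform_measure_def by (rule density_cong) (auto simp: emeasure_space_1 indicator_def)
  then show ?thesis by (simp add: density_1)
qed

lemma prob_below_threshold_ge:
  fixes X :: "'w \<Rightarrow> real"
  assumes "prob_space M" "X \<in> borel_measurable M"
    and tail: "measure M {\<omega> \<in> space M. t \<le> X \<omega>} \<le> \<delta>" and "t \<le> 1"
  shows "1 - \<delta> \<le> measure M {\<omega> \<in> space M. X \<omega> \<le> 1}"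
proof -
  interpret prob_space M by fact
  have "space M - {\<omega> \<in> space M. X \<omega> \<le> 1} \<subseteq> {\<omega> \<in> space M. t \<le> X \<omega>}"
    using \<open>t \<le> 1\<close> by auto
  moreover have "{\<omega> \<in> space M. t \<le> X \<omega>} \<in> sets M"
    using assms(2) by measurable
  ultimately have "measure M (space M - {\<omega> \<in> space M. X \<omega> \<le> 1}) \<le> \<delta>"
    using tail by (meson finite_measure_mono order_trans)
  moreover have "{\<omega> \<in> space M. X \<omega> \<le> 1} \<in> sets M"
    using assms(2) by measurable
  ultimately show ?thesis
    using prob_compl by simp
qed

lemma distr_uniform_measure_below_threshold:
  fixes X :: "'w \<Rightarrow> real"
  assumes "prob_space M" "X \<in> borel_measurable M" "measure M {\<omega> \<in> space M. X \<omega> \<le> 1} \<noteq> 0"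
  shows "distr (uniform_measure M {\<omega> \<in> space M. X \<omega> \<le> 1}) (count_space UNIV)
           (\<lambda>\<omega>. if 1 < X \<omega> then Some T else None) = return (count_space UNIV) None"
proof -
  interpret prob_space M by fact
  have E: "{\<omega> \<in> space M. X \<omega> \<le> 1} \<in> sets M"
    using assms(2) by measurable
  then interpret U: prob_space "uniform_measure M {\<omega> \<in> space M. X \<omega> \<le> 1}"
    using assms(3) by (intro prob_space_uniform_measure) (auto simp: emeasure_eq_measure)
  have "distr (uniform_measure M {\<omega> \<in> space M. X \<omega> \<le> 1}) (count_space UNIV)
          (\<lambda>\<omega>. if 1 < X \<omega> then Some T else None)
        = distr (uniform_measure M {\<omega> \<in> space M. X \<omega> \<le> 1}) (count_space UNIV) (\<lambda>_. None)"
    using E assms(2) by (intro distr_cong_AE AE_uniform_measureI AE_I2) auto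
  then show ?thesis by simp
qed

definition approx_rdp_pair ::
    "'w measure \<Rightarrow> 'b measure \<Rightarrow> ('w \<Rightarrow> 'b) \<Rightarrow> ('w \<Rightarrow> 'b) \<Rightarrow> real \<Rightarrow> (real \<Rightarrow> real) \<Rightarrow> bool" where
  "approx_rdp_pair M N f f' \<delta> \<epsilon> \<longleftrightarrow>
     (\<exists>E E'. E \<in> sets M \<and> E' \<in> sets M \<and> measure M E \<ge> 1 - \<delta> \<and> measure M E' \<ge> 1 - \<delta> \<and>
        (\<forall>\<alpha>\<ge>1. renyi_div \<alpha> (distr (uniform_measure M E) N f)
                              (distr (uniform_measure M E') N f') \<le> ereal (\<epsilon> \<alpha>)))"

lemma approx_rdp_iff_approx_rdp_pair:
  "approx_rdp M N nb mech \<delta> \<epsilon> \<longleftrightarrow> (\<forall>D D'. nb D D' \<longrightarrow> approx_rdp_pair M N (mech D) (mech D') \<delta> \<epsilon>)"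
  by (simp add: approx_rdp_def approx_rdp_pair_def)

lemma approx_rdp_pair_unconditioned:
  assumes "prob_space M" "0 \<le> \<delta>"
    and "\<And>\<alpha>. 1 \<le> \<alpha> \<Longrightarrow> renyi_div \<alpha> (distr M N f) (distr M N f') \<le> ereal (\<epsilon> \<alpha>)"
  shows "approx_rdp_pair M N f f' \<delta> \<epsilon>"
  using assms unfolding approx_rdp_pair_def
  by (intro exI[of _ "space M"]) (simp add: uniform_measure_space_eq prob_space.prob_space)

lemma approx_rdp_pair_suppressed:
  fixes X X' :: "'w \<Rightarrow> real" and T T' :: 'a
  assumes M: "prob_space M" and X: "X \<in> borel_measurable M" "X' \<in> borel_measurable M"
    and tail: "measure M {\<omega> \<in> space M. t \<le> X \<omega>} \<le> \<delta>" "measure M {\<omega> \<in> space M. t' \<le> X' \<omega>} \<le> \<delta>"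
    and "t \<le> 1" "t' \<le> 1" and \<epsilon>_nonneg: "\<And>\<alpha>. 1 \<le> \<alpha> \<Longrightarrow> 0 \<le> \<epsilon> \<alpha>"
  shows "approx_rdp_pair M (count_space UNIV) (\<lambda>\<omega>. if 1 < X \<omega> then Some T else None)
           (\<lambda>\<omega>. if 1 < X' \<omega> then Some T' else None) \<delta> \<epsilon>"
proof (cases "\<delta> < 1")
  case True
  define E where "E = {\<omega> \<in> space M. X \<omega> \<le> 1}"
  define E' where "E' = {\<omega> \<in> space M. X' \<omega> \<le> 1}"
  have sets: "E \<in> sets M" "E' \<in> sets M"
    unfolding E_def E'_def using X by measurable
  have prob: "1 - \<delta> \<le> measure M E" "1 - \<delta> \<le> measure M E'"
    unfolding E_def E'_def using prob_below_threshold_ge M X tail \<open>t \<le> 1\<close> \<open>t' \<le> 1\<close> by blast+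
  then have distr:
    "distr (uniform_measure M E) (count_space UNIV) (\<lambda>\<omega>. if 1 < X \<omega> then Some T else None)
      = return (count_space UNIV) None"
    "distr (uniform_measure M E') (count_space UNIV) (\<lambda>\<omega>. if 1 < X' \<omega> then Some T' else None)
      = return (count_space UNIV) None"
    using True unfolding E_def E'_def by (auto intro!: distr_uniform_measure_below_threshold M X)
  have "renyi_div \<alpha> (return (count_space UNIV) (None :: 'a option))
      (return (count_space UNIV) None) = 0" for \<alpha>
    by (rule renyi_div_self_eq_0) (simp add: prob_space_return)
  with distr \<epsilon>_nonneg have "\<forall>\<alpha>\<ge>1. renyi_div \<alpha>
      (distr (uniform_measure M E) (count_space UNIV) (\<lambda>\<omega>. if 1 < X \<omega> then Some T else None))
      (distr (uniform_measure M E') (count_space UNIV) (\<lambda>\<omega>. if 1 < X' \<omega> then Some T' else None))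
        \<le> ereal (\<epsilon> \<alpha>)"
    by simp
  with sets prob show ?thesis
    unfolding approx_rdp_pair_def by blast
next
  case False
  \<comment> \<open>Then the empty events are admissible. Conditioning on them gives the zero measure,
    whose self-divergence is 0 only because \<open>ln 0 = 0\<close> in Isabelle.\<close>
  have "(\<lambda>\<omega>. if 1 < Z \<omega> then Some S else None) \<in> M \<rightarrow>\<^sub>M count_space UNIV"
    if "Z \<in> borel_measurable M" for Z :: "'w \<Rightarrow> real" and S :: 'a
    using that by measurable
  then show ?thesis
    using False X \<epsilon>_nonneg unfolding approx_rdp_pair_def
    by (intro exI[of _ "{}"]) (simp add: distr_uniform_measure_empty renyi_div_null_measure)
qed

section \<open>Stability of the top-k set\<close>

lemma length_ranked [simp]: "length (ranked m D) = m"
  and distinct_ranked: "distinct (ranked m D)"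
  and set_ranked [simp]: "set (ranked m D) = {..<m}"
  by (simp_all add: ranked_def atLeast0LessThan)

lemma hcount_ranked_antimono:
  assumes "i \<le> j" "j < m"
  shows "hcount D (ranked m D ! j) \<le> hcount D (ranked m D ! i)"
proof -
  have "sorted (map (\<lambda>j. - int (hcount D j)) (ranked m D))"
    unfolding ranked_def by (rule sorted_sort_key)
  then have "map (\<lambda>j. - int (hcount D j)) (ranked m D) ! i
      \<le> map (\<lambda>j. - int (hcount D j)) (ranked m D) ! j"
    using assms by (intro sorted_nth_mono) auto
  then show ?thesis using assms by simp
qed

lemma mem_topk_iff: "x \<in> topk m k D \<longleftrightarrow> (\<exists>a<min k m. ranked m D ! a = x)"
  by (auto simp: topk_def in_set_conv_nth)

lemma not_mem_topk:
  assumes "z < m" "z \<notin> topk m k D"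
  obtains b where "k \<le> b" "b < m" "ranked m D ! b = z"
proof -
  have "z \<in> set (ranked m D)" using assms(1) by simp
  then obtain b where b: "b < m" "ranked m D ! b = z"
    unfolding in_set_conv_nth by auto
  then have "\<not> b < k" using assms(2) by (auto simp: mem_topk_iff)
  then show ?thesis using b by (intro that) auto
qed

lemma topk_subset: "topk m k D \<subseteq> {..<m}"
  using set_take_subset[of k "ranked m D"] by (simp add: topk_def)

lemma card_topk: "k \<le> m \<Longrightarrow> card (topk m k D) = k"
  by (simp add: topk_def distinct_card distinct_ranked)

lemma hsorted_le_hcount_topk:
  assumes "x \<in> topk m k D" "1 \<le> k" "k \<le> m"
  shows "hsorted m D k \<le> hcount D x"
  using assms hcount_ranked_antimono[of _ "k - 1" m D] by (auto simp: mem_topk_iff hsorted_def)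

lemma hcount_le_hsorted_Suc:
  assumes "z < m" "z \<notin> topk m k D"
  shows "hcount D z \<le> hsorted m D (k + 1)"
proof -
  obtain b where "k \<le> b" "b < m" "ranked m D ! b = z"
    using assms by (rule not_mem_topk)
  then show ?thesis using hcount_ranked_antimono[of k b m D] by (simp add: hsorted_def)
qed

lemma hcount_le_topk:
  assumes "x \<in> topk m k D" "z < m" "z \<notin> topk m k D"
  shows "hcount D z \<le> hcount D x"
proof -
  obtain a where "a < k" "a < m" "ranked m D ! a = x"
    using assms(1) by (auto simp: mem_topk_iff)
  moreover obtain b where "k \<le> b" "b < m" "ranked m D ! b = z"
    using assms(2,3) by (rule not_mem_topk)
  ultimately show ?thesis using hcount_ranked_antimono[of a b m D] by simp
qed

lemma hcount_add_mset: "hcount (add_mset u D) j = hcount D j + (if j \<in> u then 1 else 0)"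
  by (simp add: hcount_def)

lemma neighbors_sym: "neighbors m D D' \<Longrightarrow> neighbors m D' D"
  by (auto simp: neighbors_def)

lemma neighbors_hcount_order:
  assumes "neighbors m D D'" "hcount D j + 2 \<le> hcount D i"
  shows "hcount D' j < hcount D' i"
proof -
  from assms(1) consider u where "D' = add_mset u D" | u where "D = add_mset u D'"
    by (auto simp: neighbors_def)
  then show ?thesis
  proof cases
    case 1
    then show ?thesis using assms(2) by (simp add: hcount_add_mset)
  next
    case 2
    then show ?thesis using assms(2) by (simp add: hcount_add_mset split: if_splits)
  qed
qed

lemma topk_neighbors_eq:
  assumes nb: "neighbors m D D'" and k: "1 \<le> k" "k < m" and gap: "1 < gap m k D"
  shows "topk m k D' = topk m k D"
proof (rule ccontr)
  assume ne: "topk m k D' \<noteq> topk m k D"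
  have "card (topk m k D') = card (topk m k D)"
    using k by (simp add: card_topk)
  then obtain i j where i: "i \<in> topk m k D" "i \<notin> topk m k D'"
    and j: "j \<in> topk m k D'" "j \<notin> topk m k D"
    using ne card_subset_eq[of "topk m k D"] card_subset_eq[of "topk m k D'"]
    by (metis finite_set subsetI topk_def)
  have "i < m" "j < m" using i(1) j(1) topk_subset by blast+
  have "hcount D j + 2 \<le> hcount D i"
    using hcount_le_hsorted_Suc[OF \<open>j < m\<close> j(2)] hsorted_le_hcount_topk[OF i(1)] k gap
    unfolding gap_def by linarith
  then have "hcount D' j < hcount D' i"
    by (rule neighbors_hcount_order[OF nb])
  moreover have "hcount D' i \<le> hcount D' j"
    using hcount_le_topk[OF j(1) \<open>i < m\<close> i(2)] .
  ultimately show False by simp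
qed

theorem mainTheorem7:
  fixes M :: "'w measure"
    and qhat :: "nat set multiset \<Rightarrow> 'w \<Rightarrow> real"
    and m k :: nat and \<delta>t :: real and \<epsilon>gap :: "real \<Rightarrow> real"
  assumes "prob_space M"
    and "1 \<le> k" and "k \<le> m - 1"
    and meas: "\<And>D. qhat D \<in> borel_measurable M"
    and rdp_gap: "\<And>\<alpha>. \<alpha> \<ge> 1 \<Longrightarrow> rdp M borel (neighbors m) qhat \<alpha> (\<epsilon>gap \<alpha>)"
    and tail: "\<And>D. valid_ds m D \<Longrightarrow>
                 measure M {\<omega> \<in> space M. qhat D \<omega> \<ge> gap m k D} \<le> \<delta>t"
  shows "approx_rdp M (count_space UNIV) (neighbors m)
           (\<lambda>D \<omega>. if qhat D \<omega> > 1 then Some (topk m k D) else None) \<delta>t \<epsilon>gap"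
  unfolding approx_rdp_iff_approx_rdp_pair
proof (intro allI impI)
  fix D D' assume nb: "neighbors m D D'"
  then have valid: "valid_ds m D" "valid_ds m D'"
    by (auto simp: neighbors_def)
  show "approx_rdp_pair M (count_space UNIV) (\<lambda>\<omega>. if 1 < qhat D \<omega> then Some (topk m k D) else None)
          (\<lambda>\<omega>. if 1 < qhat D' \<omega> then Some (topk m k D') else None) \<delta>t \<epsilon>gap"
  proof (cases "topk m k D = topk m k D'")
    case True
    have "rdp M (count_space UNIV) (neighbors m)
        (\<lambda>D \<omega>. if 1 < qhat D \<omega> then Some (topk m k D') else None) \<alpha> (\<epsilon>gap \<alpha>)" if "1 \<le> \<alpha>" for \<alpha>
      using that
      by (intro rdp_postprocess[OF assms(1) meas rdp_gap, where Y = "{Some (topk m k D'), None}"])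
        (auto intro: measurable_If)
    moreover have "0 \<le> \<delta>t"
      using tail[OF valid(1)] measure_nonneg order_trans by blast
    ultimately show ?thesis
      using nb unfolding True by (intro approx_rdp_pair_unconditioned assms(1)) (auto simp: rdp_def)
  next
    case False
    then have "\<not> 1 < gap m k D" "\<not> 1 < gap m k D'"
      using topk_neighbors_eq[OF nb] topk_neighbors_eq[OF neighbors_sym[OF nb]] assms(2,3) by force+
    then show ?thesis
      using rdp_nonneg[OF assms(1) meas rdp_gap nb]
      by (intro approx_rdp_pair_suppressed[OF assms(1) meas meas tail[OF valid(1)] tail[OF valid(2)]])
        auto
  qed
qed

end
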